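(* Let $\tau_0\in(0,1)$, $\bar\beta>0$, and define $\tau_{k+1}:=\frac{\tau_k}{2}\big[\sqrt{\tau_k^2+4}-\tau_k\big]$ for $k\ge0$. Let $\beta_1^0=\beta_2^0:=\bar\beta$ and for $k\ge0$ set $\beta_1^{k+1}:=(1-\tau_k)\beta_1^k$, $\beta_2^{k+1}:=\beta_2^k$ if $k$ is even, and $\beta_1^{k+1}:=\beta_1^k$, $\beta_2^{k+1}:=(1-\tau_k)\beta_2^k$ if $k$ is odd. Then for all $k\ge1$, $$\frac{(1-\tau_0)\bar\beta}{2\tau_0k+1}<\beta_1^k<\frac{2\bar\beta\sqrt{1-\tau_0}}{\tau_0k},\qquad \frac{\bar\beta\sqrt{1-\tau_0}}{2\tau_0k+1}<\beta_2^k<\frac{2\bar\beta}{\tau_0k}.$$ *)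

theory Defs
  imports Complex_Main
begin

primrec tau :: "real \<Rightarrow> nat \<Rightarrow> real" where
  "tau t0 0 = t0"
| "tau t0 (Suc k) = tau t0 k / 2 * (sqrt ((tau t0 k)\<^sup>2 + 4) - tau t0 k)"

primrec betas :: "real \<Rightarrow> real \<Rightarrow> nat \<Rightarrow> real \<times> real" where
  "betas t0 b 0 = (b, b)"
| "betas t0 b (Suc k) =
     (if even k then ((1 - tau t0 k) * fst (betas t0 b k), snd (betas t0 b k))
      else (fst (betas t0 b k), (1 - tau t0 k) * snd (betas t0 b k)))"

definition beta1 :: "real \<Rightarrow> real \<Rightarrow> nat \<Rightarrow> real" where
  "beta1 t0 b k = fst (betas t0 b k)"

definition beta2 :: "real \<Rightarrow> real \<Rightarrow> nat \<Rightarrow> real" where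
  "beta2 t0 b k = snd (betas t0 b k)"

end

theory Submission
  imports Defs
begin

text \<open>
  The step size obeys  tau(k+1)^2 = (1 - tau(k+1)) * tau(k)^2, so
  its reciprocals u(k) = 1/tau(k) satisfy u(k+1)^2 - u(k+1) = u(k)^2, which forces
  u(k) + 1/2 <= u(k+1) <= u(k) + 1; hence tau(k-1) is of order 2/k.
  The same recurrence makes the product of the factors (1 - tau(i)) telescope, giving
  beta1(k) * beta2(k) = (1 - tau0) * Q^2  with  Q = b * tau(k-1) / tau0.
  Because the two sequences are shrunk alternately by decreasing factors, they stay
  comparable:  (1 - tau0) * beta2(k) <= beta1(k) <= beta2(k).  A product together with
  such a ratio bound pins down both factors around the geometric mean, and the
  estimates on Q finish the proof.
\<close>

lemma tau_step_props:
  fixes t :: real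
  assumes t: "0 < t"
  defines "s \<equiv> t / 2 * (sqrt (t\<^sup>2 + 4) - t)"
  shows "0 < s" "s < t" "s\<^sup>2 = (1 - s) * t\<^sup>2"
proof -
  define q where "q = sqrt (t\<^sup>2 + 4)"
  have q2: "q\<^sup>2 = t\<^sup>2 + 4" and q0: "0 \<le> q" unfolding q_def by simp_all
  have "t < q" using q2 q0 t by (intro power_less_imp_less_base[of t 2 q]) auto
  moreover have "q < t + 2"
  proof (rule power_less_imp_less_base[of q 2])
    show "q\<^sup>2 < (t + 2)\<^sup>2" using q2 t by (simp add: power2_eq_square algebra_simps)
  qed (use t in auto)
  moreover have s: "s = t * (q - t) / 2" unfolding s_def q_def by simp
  ultimately have "0 < t * (q - t)" "t * (q - t) < t * 2" using t by simp_all
  then show "0 < s" "s < t" using s by simp_all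
  have "s\<^sup>2 = t\<^sup>2 * (q - t)\<^sup>2 / 4" by (simp add: s power_mult_distrib power_divide)
  also have "\<dots> = t\<^sup>2 * (2 * t\<^sup>2 + 4 - 2 * q * t) / 4" using q2 by (simp add: power2_diff)
  also have "\<dots> = (1 - s) * t\<^sup>2" by (simp add: s field_simps power2_eq_square)
  finally show "s\<^sup>2 = (1 - s) * t\<^sup>2" .
qed

lemma reciprocal_increment:
  fixes u v :: real
  assumes "0 < u" "u \<le> v" "v\<^sup>2 - v = u\<^sup>2"
  shows "u + 1/2 \<le> v" "v \<le> u + 1"
proof -
  have e: "(v - u) * (v + u) = v" using assms(3) by (simp add: algebra_simps power2_eq_square)
  show "v \<le> u + 1"
  proof (rule ccontr)
    assume "\<not> v \<le> u + 1"
    then have "1 * (v + u) < (v - u) * (v + u)" using assms by (intro mult_strict_right_mono) auto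
    then show False using e assms by simp
  qed
  show "u + 1/2 \<le> v"
  proof (rule ccontr)
    assume "\<not> u + 1/2 \<le> v"
    then have "(v - u) * (v + u) < (1/2) * (v + u)" using assms by (intro mult_strict_right_mono) auto
    then show False using e assms by simp
  qed
qed

text \<open>All facts about tau(k+1) are obtained from tau_step_props.\<close>
declare tau.simps(2) [simp del]

context
  fixes t0 :: real
  assumes t0: "0 < t0" "t0 < 1"
begin

lemma tau_pos: "0 < tau t0 n"
proof (induction n)
  case (Suc n) show ?case unfolding tau.simps by (rule tau_step_props(1)[OF Suc.IH])
qed (use t0 in simp)

lemma tau_decreasing: "tau t0 (Suc n) < tau t0 n"
  unfolding tau.simps by (rule tau_step_props(2)[OF tau_pos])

lemma tau_less_1: "tau t0 n < 1"
proof (induction n)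
  case (Suc n) then show ?case using tau_decreasing[of n] by linarith
qed (use t0 in simp)

lemma tau_recurrence: "(tau t0 (Suc n))\<^sup>2 = (1 - tau t0 (Suc n)) * (tau t0 n)\<^sup>2"
  unfolding tau.simps by (rule tau_step_props(3)[OF tau_pos])

lemma tau_reciprocal_bounds: "1/t0 + real n / 2 \<le> 1 / tau t0 n \<and> 1 / tau t0 n \<le> 1/t0 + real n"
proof (induction n)
  case (Suc n)
  let ?t = "tau t0 n" and ?s = "tau t0 (Suc n)"
  have p: "0 < ?t" "0 < ?s" "?s < ?t" using tau_pos tau_decreasing by auto
  have "(1/?s)\<^sup>2 - 1/?s = (1/?t)\<^sup>2"
    using p tau_recurrence[of n] by (simp add: field_simps power2_eq_square)
  moreover have "1/?t \<le> 1/?s" using p by (simp add: frac_le)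
  ultimately have "1/?t + 1/2 \<le> 1/?s" "1/?s \<le> 1/?t + 1"
    using reciprocal_increment[of "1/?t" "1/?s"] p by auto
  moreover have "1/t0 + real n / 2 \<le> 1/?t" "1/?t \<le> 1/t0 + real n" using Suc by auto
  moreover have "real (Suc n) / 2 = real n / 2 + 1/2" "real (Suc n) = real n + 1" by simp_all
  ultimately show ?case by (intro conjI) linarith+
qed simp

lemma tau_bounds:
  "t0 / (2 * t0 * real (Suc m) + 1) < tau t0 m \<and> tau t0 m < 2 / real (Suc m)"
proof
  have t: "0 < tau t0 m" by (rule tau_pos)
  have "1 / tau t0 m \<le> 1/t0 + real m" using tau_reciprocal_bounds by blast
  also have "\<dots> < 1/t0 + 2 * real (Suc m)" by simp
  also have "\<dots> = (2 * t0 * real (Suc m) + 1) / t0" using t0 by (simp add: field_simps)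
  finally have "t0 < (2 * t0 * real (Suc m) + 1) * tau t0 m" using t t0 by (simp add: field_simps)
  moreover have "0 < 2 * t0 * real (Suc m) + 1" using t0 by (simp add: add_pos_nonneg)
  ultimately show "t0 / (2 * t0 * real (Suc m) + 1) < tau t0 m" by (simp add: divide_less_eq mult.commute)
  have "1 < 1/t0" using t0 by simp
  then have "real (Suc m) / 2 < 1 / tau t0 m" using tau_reciprocal_bounds[of m] by simp
  then show "tau t0 m < 2 / real (Suc m)" using t by (simp add: field_simps)
qed

lemma scaled_tau_bounds:
  assumes b: "0 < b"
  shows "b / (2 * t0 * real (Suc m) + 1) < b * tau t0 m / t0"
    and "b * tau t0 m / t0 < 2 * b / (t0 * real (Suc m))"
proof -
  have "b / t0 * (t0 / (2 * t0 * real (Suc m) + 1)) < b / t0 * tau t0 m"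
    "b / t0 * tau t0 m < b / t0 * (2 / real (Suc m))"
    using tau_bounds[of m] b t0 by (simp_all only: mult_strict_left_mono divide_pos_pos)
  then show "b / (2 * t0 * real (Suc m) + 1) < b * tau t0 m / t0"
    and "b * tau t0 m / t0 < 2 * b / (t0 * real (Suc m))"
    using t0 by (simp_all add: mult.commute)
qed

lemma beta1_Suc: "beta1 t0 b (Suc k) = (if even k then (1 - tau t0 k) * beta1 t0 b k else beta1 t0 b k)"
  and beta2_Suc: "beta2 t0 b (Suc k) = (if even k then beta2 t0 b k else (1 - tau t0 k) * beta2 t0 b k)"
  by (simp_all add: beta1_def beta2_def)

lemma beta_pos: "0 < b \<Longrightarrow> 0 < beta1 t0 b k \<and> 0 < beta2 t0 b k"
  by (induction k) (use tau_less_1 in \<open>auto simp: beta1_Suc beta2_Suc beta1_def beta2_def\<close>)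

text \<open>Each step multiplies the product by (1 - tau(k)); by the recurrence these
  factors telescope to (1 - tau0) * tau(k)^2 / tau0^2.\<close>
lemma beta_product:
  "beta1 t0 b (Suc k) * beta2 t0 b (Suc k) = (1 - t0) * (b * tau t0 k / t0)\<^sup>2"
proof (induction k)
  case 0 then show ?case using t0 by (simp add: beta1_def beta2_def power2_eq_square)
next
  case (Suc k)
  have "beta1 t0 b (Suc (Suc k)) * beta2 t0 b (Suc (Suc k))
      = (1 - tau t0 (Suc k)) * (beta1 t0 b (Suc k) * beta2 t0 b (Suc k))"
    by (simp add: beta1_Suc beta2_Suc)
  also have "\<dots> = (1 - t0) * b\<^sup>2 * ((1 - tau t0 (Suc k)) * (tau t0 k)\<^sup>2) / t0\<^sup>2"
    by (simp add: Suc power_mult_distrib power_divide)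
  finally show ?case by (simp add: tau_recurrence power_mult_distrib power_divide)
qed

text \<open>Invariant at even indices: beta1 never overtakes beta2, and beta1 after its next
  shrinking is still at least (1 - tau0) * beta2.\<close>
lemma beta_ratio_even:
  assumes b: "0 < b" and k: "k = 2 * j"
  shows "(1 - t0) * beta2 t0 b k \<le> (1 - tau t0 k) * beta1 t0 b k \<and> beta1 t0 b k \<le> beta2 t0 b k"
  unfolding k
proof (induction j)
  case (Suc j)
  let ?k = "2 * j"
  let ?x = "beta1 t0 b ?k" and ?y = "beta2 t0 b ?k"
  have IH: "(1 - t0) * ?y \<le> (1 - tau t0 ?k) * ?x" "?x \<le> ?y" using Suc by auto
  have pos: "0 < ?x" "0 < ?y" using beta_pos b by auto
  have dec: "tau t0 (Suc (Suc ?k)) < tau t0 (Suc ?k)" "tau t0 (Suc ?k) < tau t0 ?k"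
    using tau_decreasing by blast+
  have k': "2 * Suc j = Suc (Suc ?k)" by simp
  have x': "beta1 t0 b (Suc (Suc ?k)) = (1 - tau t0 ?k) * ?x"
    and y': "beta2 t0 b (Suc (Suc ?k)) = (1 - tau t0 (Suc ?k)) * ?y"
    by (simp_all add: beta1_Suc beta2_Suc)
  have "(1 - t0) * ((1 - tau t0 (Suc ?k)) * ?y) \<le> (1 - tau t0 (Suc ?k)) * ((1 - tau t0 ?k) * ?x)"
    using IH(1) tau_less_1[of "Suc ?k"] by (simp add: mult.left_commute mult_left_mono)
  also have "\<dots> \<le> (1 - tau t0 (Suc (Suc ?k))) * ((1 - tau t0 ?k) * ?x)"
    using dec tau_less_1[of ?k] pos by (intro mult_right_mono) auto
  finally have lower: "(1 - t0) * beta2 t0 b (Suc (Suc ?k))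
      \<le> (1 - tau t0 (Suc (Suc ?k))) * beta1 t0 b (Suc (Suc ?k))" by (simp add: x' y')
  have "(1 - tau t0 ?k) * ?x \<le> (1 - tau t0 (Suc ?k)) * ?y"
    using IH(2) dec tau_less_1[of ?k] pos by (intro mult_mono) auto
  then show ?case unfolding k' using lower by (simp add: x' y')
qed (simp add: beta1_def beta2_def)

lemma beta_ratio:
  assumes b: "0 < b"
  shows "(1 - t0) * beta2 t0 b k \<le> beta1 t0 b k \<and> beta1 t0 b k \<le> beta2 t0 b k"
proof (cases "even k")
  case True
  then obtain j where k: "k = 2 * j" by blast
  have "(1 - tau t0 k) * beta1 t0 b k \<le> beta1 t0 b k"
    using tau_pos[of k] beta_pos[OF b, of k] by (simp add: mult_le_cancel_right1)
  then show ?thesis using beta_ratio_even[OF b k] by linarith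
next
  case False
  then obtain j where k: "k = Suc (2 * j)" by (auto elim: oddE)
  have ratio: "(1 - t0) * beta2 t0 b (2 * j) \<le> (1 - tau t0 (2 * j)) * beta1 t0 b (2 * j)"
    "beta1 t0 b (2 * j) \<le> beta2 t0 b (2 * j)"
    using beta_ratio_even[OF b refl] by auto
  have "(1 - tau t0 (2 * j)) * beta1 t0 b (2 * j) \<le> beta1 t0 b (2 * j)"
    using tau_pos[of "2 * j"] beta_pos[OF b, of "2 * j"] by (simp add: mult_le_cancel_right1)
  then show ?thesis using ratio by (simp add: k beta1_Suc beta2_Suc)
qed

end

lemma product_ratio_sandwich:
  fixes x y r Q :: real
  assumes "0 < x" "0 < r" "0 \<le> Q"
    and prod: "x * y = (r * Q)\<^sup>2" and ratio: "r\<^sup>2 * y \<le> x" "x \<le> y"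
  shows "r\<^sup>2 * Q \<le> x" "x \<le> r * Q" "r * Q \<le> y" "y \<le> Q"
proof -
  have rQ: "0 \<le> r * Q" using assms by simp
  have "x\<^sup>2 \<le> x * y" using assms unfolding power2_eq_square by (intro mult_left_mono) auto
  then have "x\<^sup>2 \<le> (r * Q)\<^sup>2" by (simp only: prod)
  then show "x \<le> r * Q" using rQ by (rule power2_le_imp_le)
  have "x * y \<le> y\<^sup>2" using assms unfolding power2_eq_square by (intro mult_right_mono) auto
  then have "(r * Q)\<^sup>2 \<le> y\<^sup>2" by (simp only: prod)
  then show "r * Q \<le> y" by (rule power2_le_imp_le) (use assms in simp)
  have "(r\<^sup>2 * Q)\<^sup>2 = r\<^sup>2 * y * x" using prod by (simp add: power2_eq_square algebra_simps)
  also have "\<dots> \<le> x\<^sup>2" using assms unfolding power2_eq_square by (intro mult_right_mono) auto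
  finally show "r\<^sup>2 * Q \<le> x" by (rule power2_le_imp_le) (use assms in simp)
  have "(r * y)\<^sup>2 = r\<^sup>2 * y * y" by (simp add: power2_eq_square)
  also have "\<dots> \<le> x * y" using assms by (intro mult_right_mono) auto
  also have "\<dots> = (r * Q)\<^sup>2" by (rule prod)
  finally have "r * y \<le> r * Q" using rQ by (rule power2_le_imp_le)
  then show "y \<le> Q" using assms by simp
qed

theorem lemma7:
  fixes tau0 b :: real and k :: nat
  assumes "0 < tau0" and "tau0 < 1" and "0 < b" and "1 \<le> k"
  shows "(1 - tau0) * b / (2 * tau0 * real k + 1) < beta1 tau0 b k
       \<and> beta1 tau0 b k < 2 * b * sqrt (1 - tau0) / (tau0 * real k)
       \<and> b * sqrt (1 - tau0) / (2 * tau0 * real k + 1) < beta2 tau0 b k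
       \<and> beta2 tau0 b k < 2 * b / (tau0 * real k)"
proof -
  obtain m where k: "k = Suc m" using assms(4) by (cases k) auto
  define r where "r = sqrt (1 - tau0)"
  define Q where "Q = b * tau tau0 m / tau0"
  have r: "0 < r" "r\<^sup>2 = 1 - tau0" using assms by (simp_all add: r_def)
  have Q_bounds: "b / (2 * tau0 * real k + 1) < Q" "Q < 2 * b / (tau0 * real k)"
    unfolding Q_def k using scaled_tau_bounds[OF assms(1-3)] by auto
  have "(r * Q)\<^sup>2 = (1 - tau0) * Q\<^sup>2" using r(2) by (simp add: power_mult_distrib)
  then have prod: "beta1 tau0 b k * beta2 tau0 b k = (r * Q)\<^sup>2"
    using beta_product[OF assms(1,2), of b m] unfolding k Q_def by simp
  have ratio: "r\<^sup>2 * beta2 tau0 b k \<le> beta1 tau0 b k" "beta1 tau0 b k \<le> beta2 tau0 b k"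
    using beta_ratio[OF assms(1-3)] r(2) by auto
  have Q0: "0 \<le> Q" using tau_pos[OF assms(1,2), of m] assms by (simp add: Q_def)
  have pos: "0 < beta1 tau0 b k" using beta_pos[OF assms(1-3)] by blast
  note sandwich = product_ratio_sandwich[OF pos r(1) Q0 prod ratio]
  have "r\<^sup>2 * (b / (2 * tau0 * real k + 1)) < r\<^sup>2 * Q"
    and "r * Q < r * (2 * b / (tau0 * real k))"
    and "r * (b / (2 * tau0 * real k + 1)) < r * Q"
    using Q_bounds r(1) by (simp_all only: mult_strict_left_mono zero_less_power)
  moreover have "r\<^sup>2 * (b / (2 * tau0 * real k + 1)) = (1 - tau0) * b / (2 * tau0 * real k + 1)"
    and "r * (2 * b / (tau0 * real k)) = 2 * b * sqrt (1 - tau0) / (tau0 * real k)"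
    and "r * (b / (2 * tau0 * real k + 1)) = b * sqrt (1 - tau0) / (2 * tau0 * real k + 1)"
    using r(2) by (simp_all add: r_def)
  ultimately show ?thesis
    using sandwich Q_bounds(2) by (intro conjI) linarith+
qed

end
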